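(* Let $K=(C,\langle Q_i,1\le i\le k\rangle)$ and $K'=(C',\langle Q'_j,1\le j\le l\rangle)$ be two CMIs on $X_1,\dots,X_n$, both in pure form. Then $K\sim K'$ if and only if $\mathrm{can}(K)=\mathrm{can}(K')$.
   Context: Setting: $X_1,\dots,X_n$ are jointly distributed discrete random variables with $H(X_i)<\infty$ for all $i$; the joint distribution is otherwise unspecified. Write $\mathcal N_n=\{1,\dots,n\}$, $X_\alpha=(X_i,i\in\alpha)$ for $\alpha\subseteq\mathcal N_n$, and $X_\emptyset$ is a constant. A CMI (conditional mutual independency) is a pair $K=(C,\langle Q_1,\dots,Q_k\rangle)$ with $k\ge 0$, $C\subseteq\mathcal N_n$ and $\langle Q_1,\dots,Q_k\rangle$ an unordered finite collection (multiset: repetitions allowed, order immaterial) of subsets of $\mathcal N_n$. For a given joint distribution, $K$ is valid if $\sum_{i=1}^k H(X_{Q_i}|X_C)-H(X_{Q_1},\dots,X_{Q_k}|X_C)=0$ (automatic when $k\le 1$). Members $Q_j=\emptyset$ may be deleted without changing the CMI. Two CMIs are equal if their conditioning sets are equal and their collections are equal as multisets. $K\sim K'$ means: for every joint distribution of $X_1,\dots,X_n$, $K$ and $K'$ are both valid or both invalid. $K$ is degenerate if it is valid for every joint distribution; all degenerate CMIs are identified and denoted $(\cdot,\langle\ \rangle)$. Pure form: $K$ is in pure form if $Q_i\ne\emptyset$ and $Q_i\cap C=\emptyset$ for all $i$. Canonical form of a pure $K=(C,\langle Q_1,\dots,Q_k\rangle)$: if $k\ge2$, let $\mathbb I_K$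 be the set of indices $q$ lying in at least two members $Q_{i},Q_{i'}$ ($i\ne i'$) of the collection; if $k\le1$, $\mathbb I_K=\emptyset$. Let $P_1,\dots,P_t$ be the nonempty sets among $Q_1\setminus\mathbb I_K,\dots,Q_k\setminus\mathbb I_K$ (with multiplicity). Then $\mathrm{can}(K)=(\cdot,\langle\ \rangle)$ if $k\in\{0,1\}$; $\mathrm{can}(K)=(C,\langle\mathbb I_K,\mathbb I_K\rangle)$ if $k\ge2$, $\mathbb I_K\ne\emptyset$, $t\in\{0,1\}$; $\mathrm{can}(K)=(C,\langle P_1,\dots,P_t\rangle)$ if $k\ge2$, $\mathbb I_K=\emptyset$; $\mathrm{can}(K)=(C,\langle\mathbb I_K,\mathbb I_K,P_1,\dots,P_t\rangle)$ if $k\ge2$, $\mathbb I_K\ne\emptyset$, $t\ge2$. *)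

theory Defs
  imports "HOL-Probability.Probability_Mass_Function" "HOL-Library.Multiset"
begin

text \<open>A joint distribution of the discrete random variables X_1,...,X_n is a pmf on
  outcomes x :: nat => nat, where X_i is the coordinate x i (countable values, WLOG in nat).\<close>

type_synonym outcome = "nat \<Rightarrow> nat"

definition ent_ext :: "'a pmf \<Rightarrow> ennreal" where
  "ent_ext q = (\<integral>\<^sup>+ y. ennreal (- pmf q y * log 2 (pmf q y)) \<partial>count_space UNIV)"

definition ent :: "'a pmf \<Rightarrow> real" where
  "ent q = enn2real (ent_ext q)"

definition H :: "outcome pmf \<Rightarrow> (outcome \<Rightarrow> 'b) \<Rightarrow> real" where
  "H p Y = ent (map_pmf Y p)"

definition Hc :: "outcome pmf \<Rightarrow> (outcome \<Rightarrow> 'b) \<Rightarrow> (outcome \<Rightarrow> 'c) \<Rightarrow> real" where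
  "Hc p Y Z = H p (\<lambda>x. (Y x, Z x)) - H p Z"

definition Xs :: "nat set \<Rightarrow> outcome \<Rightarrow> (nat \<Rightarrow> nat)" where
  "Xs \<alpha> x = restrict x \<alpha>"

definition Xjoint :: "nat set multiset \<Rightarrow> outcome \<Rightarrow> (nat set \<Rightarrow> (nat \<Rightarrow> nat))" where
  "Xjoint Qs x = restrict (\<lambda>Q. Xs Q x) (set_mset Qs)"

definition finite_entropies :: "nat \<Rightarrow> outcome pmf \<Rightarrow> bool" where
  "finite_entropies n p \<longleftrightarrow> (\<forall>i\<in>{1..n}. ent_ext (map_pmf (\<lambda>x. x i) p) < \<infinity>)"

type_synonym cmi = "nat set \<times> nat set multiset"

definition is_cmi :: "nat \<Rightarrow> cmi \<Rightarrow> bool" where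
  "is_cmi n K \<longleftrightarrow> fst K \<subseteq> {1..n} \<and> (\<forall>Q\<in>#snd K. Q \<subseteq> {1..n})"

definition valid :: "outcome pmf \<Rightarrow> cmi \<Rightarrow> bool" where
  "valid p K \<longleftrightarrow> (case K of (C, Qs) \<Rightarrow>
     (\<Sum>Q\<in>#Qs. Hc p (Xs Q) (Xs C)) - Hc p (Xjoint Qs) (Xs C) = 0)"

definition cmi_equiv :: "nat \<Rightarrow> cmi \<Rightarrow> cmi \<Rightarrow> bool" where
  "cmi_equiv n K K' \<longleftrightarrow>
     (\<forall>p :: outcome pmf. finite_entropies n p \<longrightarrow> (valid p K \<longleftrightarrow> valid p K'))"

definition pure :: "cmi \<Rightarrow> bool" where
  "pure K \<longleftrightarrow> (\<forall>Q\<in>#snd K. Q \<noteq> {} \<and> Q \<inter> fst K = {})"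

definition IK :: "nat set multiset \<Rightarrow> nat set" where
  "IK Qs = (if size Qs \<le> 1 then {} else {q. 2 \<le> size (filter_mset (\<lambda>Q. q \<in> Q) Qs)})"

definition Ps :: "nat set multiset \<Rightarrow> nat set multiset" where
  "Ps Qs = filter_mset (\<lambda>P. P \<noteq> {}) (image_mset (\<lambda>Q. Q - IK Qs) Qs)"

text \<open>Canonical form; None stands for the degenerate CMI.\<close>
definition can :: "cmi \<Rightarrow> cmi option" where
  "can K = (case K of (C, Qs) \<Rightarrow>
     if size Qs \<le> 1 then None
     else if IK Qs \<noteq> {} \<and> size (Ps Qs) \<le> 1 then Some (C, {#IK Qs, IK Qs#})
     else if IK Qs = {} then Some (C, Ps Qs)
     else Some (C, {#IK Qs, IK Qs#} + Ps Qs))"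

end

theory Submission
  imports Defs
begin

(* Write g(A) = H(X_(A u C)) - H(X_C). By Shannon's inequalities g is a polymatroid (g {} = 0,
   monotone, submodular), and K is valid iff its defect sum_i g(Q_i) - g(U_i Q_i) vanishes.
   An index lying in two members Q_i, Q_j has g-value at most g(Q_i n Q_j), which is bounded by
   the defect; so a vanishing defect forces g(I_K) = 0, and then I_K can be removed from every
   member without changing the defect. Hence K is valid iff g(I_K) = 0 and the defect of
   <P_1,...,P_t> vanishes, which is also exactly when can(K) is valid: this proves "if".
   For "only if", let X_j be one fair bit for j in S and constant otherwise. Then K is invalid
   iff S misses C and meets at least two members. Suitable S detect whether k >= 2 (S = U_i Q_i),
   recover C (S = {i} u U_j Q'_j) and I_K (S = {q}), and tell for points outside C u I_K whether
   they lie in different blocks P_j (S = {x, y}); this relation determines the disjoint blocks. *)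

lemma neg_log_nonneg: "0 \<le> a \<Longrightarrow> a \<le> 1 \<Longrightarrow> 0 \<le> - log 2 (a::real)"
  by (cases "a = 0") (auto simp: log_def divide_nonpos_pos ln_le_zero_iff)

lemma ent_ext_map_pmf_eq_nn_integral:
  "ent_ext (map_pmf Y p) = (\<integral>\<^sup>+ \<omega>. ennreal (- log 2 (pmf (map_pmf Y p) (Y \<omega>))) \<partial>p)"
proof -
  have "ent_ext (map_pmf Y p) = (\<integral>\<^sup>+ y. ennreal (pmf (map_pmf Y p) y) *
      ennreal (- log 2 (pmf (map_pmf Y p) y)) \<partial>count_space UNIV)"
    unfolding ent_ext_def by (simp add: ennreal_mult'[symmetric])
  also have "\<dots> = (\<integral>\<^sup>+ y. ennreal (- log 2 (pmf (map_pmf Y p) y)) \<partial>measure_pmf (map_pmf Y p))"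
    by (rule nn_integral_measure_pmf[symmetric])
  finally show ?thesis by simp
qed

lemma ent_ext_map_pmf_mono:
  assumes "\<And>\<omega> \<omega>'. Y \<omega> = Y \<omega>' \<Longrightarrow> X \<omega> = X \<omega>'"
  shows "ent_ext (map_pmf X p) \<le> ent_ext (map_pmf Y p)"
  unfolding ent_ext_map_pmf_eq_nn_integral
proof (intro nn_integral_mono_AE AE_pmfI ennreal_leI)
  fix \<omega> assume "\<omega> \<in> set_pmf p"
  then have "0 < pmf (map_pmf Y p) (Y \<omega>)" by (simp add: pmf_positive)
  moreover have "pmf (map_pmf Y p) (Y \<omega>) \<le> pmf (map_pmf X p) (X \<omega>)"
    unfolding pmf_map by (rule measure_pmf.finite_measure_mono) (auto dest: assms)
  ultimately show "- log 2 (pmf (map_pmf X p) (X \<omega>)) \<le> - log 2 (pmf (map_pmf Y p) (Y \<omega>))"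
    by simp
qed

lemma ent_ext_map_pmf_cong:
  assumes "\<And>\<omega> \<omega>'. X \<omega> = X \<omega>' \<longleftrightarrow> Y \<omega> = Y \<omega>'"
  shows "ent_ext (map_pmf X p) = ent_ext (map_pmf Y p)"
  using assms by (intro antisym ent_ext_map_pmf_mono) auto

lemma ent_ext_return_pmf: "ent_ext (return_pmf c) = 0"
proof -
  have "ennreal (- pmf (return_pmf c) y * log 2 (pmf (return_pmf c) y)) = 0" for y
    by (cases "c = y") auto
  then show ?thesis unfolding ent_ext_def by simp
qed

definition cond_indep_coupling ::
    "'a pmf \<Rightarrow> ('a \<Rightarrow> 'b) \<Rightarrow> ('a \<Rightarrow> 'c) \<Rightarrow> ('a \<Rightarrow> 'd) \<Rightarrow> ('b \<times> 'c \<times> 'd) pmf" where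
  "cond_indep_coupling p X Y Z = bind_pmf p (\<lambda>\<omega>. map_pmf (Pair (X \<omega>))
      (cond_pmf (map_pmf (\<lambda>\<omega>. (Y \<omega>, Z \<omega>)) p) {t. snd t = Z \<omega>}))"

lemma pmf_cond_indep_coupling_step:
  assumes "\<omega>1 \<in> set_pmf p"
  shows "pmf (map_pmf (Pair (X \<omega>1)) (cond_pmf (map_pmf (\<lambda>\<omega>. (Y \<omega>, Z \<omega>)) p) {t. snd t = Z \<omega>1}))
      (x, y, z)
    = indicator {\<omega>. X \<omega> = x \<and> Z \<omega> = z} \<omega>1 *
      (pmf (map_pmf (\<lambda>\<omega>. (Y \<omega>, Z \<omega>)) p) (y, z) / pmf (map_pmf Z p) z)"
proof -
  let ?M = "map_pmf (\<lambda>\<omega>. (Y \<omega>, Z \<omega>)) p" and ?S = "{t. snd t = Z \<omega>1}"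
  have ne: "set_pmf ?M \<inter> ?S \<noteq> {}" using assms by auto
  have "Pair (X \<omega>1) -` {(x, y, z)} = (if X \<omega>1 = x then {(y, z)} else {})" by auto
  then have "pmf (map_pmf (Pair (X \<omega>1)) (cond_pmf ?M ?S)) (x, y, z)
      = (if X \<omega>1 = x then pmf (cond_pmf ?M ?S) (y, z) else 0)"
    by (simp add: pmf_map measure_pmf_single)
  also have "\<dots> = indicator {\<omega>. X \<omega> = x \<and> Z \<omega> = z} \<omega>1 * (pmf ?M (y, z) / pmf (map_pmf Z p) z)"
    by (auto simp: pmf_cond[OF ne] pmf_map vimage_def indicator_def)
  finally show ?thesis .
qed

lemma pmf_cond_indep_coupling:
  assumes "\<omega> \<in> set_pmf p"
  shows "pmf (cond_indep_coupling p X Y Z) (X \<omega>, Y \<omega>, Z \<omega>) =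
    pmf (map_pmf (\<lambda>\<omega>. (X \<omega>, Z \<omega>)) p) (X \<omega>, Z \<omega>) * pmf (map_pmf (\<lambda>\<omega>. (Y \<omega>, Z \<omega>)) p) (Y \<omega>, Z \<omega>)
      / pmf (map_pmf Z p) (Z \<omega>)"
proof -
  let ?A = "{\<omega>'. X \<omega>' = X \<omega> \<and> Z \<omega>' = Z \<omega>}"
  have "pmf (cond_indep_coupling p X Y Z) (X \<omega>, Y \<omega>, Z \<omega>) = (\<integral>\<omega>1. indicator ?A \<omega>1 *
      (pmf (map_pmf (\<lambda>\<omega>. (Y \<omega>, Z \<omega>)) p) (Y \<omega>, Z \<omega>) / pmf (map_pmf Z p) (Z \<omega>)) \<partial>p)"
    unfolding cond_indep_coupling_def pmf_bind
    by (intro integral_cong_AE) (auto intro!: AE_pmfI simp: pmf_cond_indep_coupling_step)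
  moreover have "measure p ?A = pmf (map_pmf (\<lambda>\<omega>. (X \<omega>, Z \<omega>)) p) (X \<omega>, Z \<omega>)"
    by (simp add: pmf_map vimage_def)
  ultimately show ?thesis by simp
qed

lemma nn_integral_pmf_ratio_le_1:
  fixes p :: "'a pmf" and q :: "'b pmf"
  shows "(\<integral>\<^sup>+ \<omega>. ennreal (pmf q (T \<omega>) / pmf (map_pmf T p) (T \<omega>)) \<partial>p) \<le> 1"
proof -
  let ?\<mu> = "map_pmf T p"
  have "(\<integral>\<^sup>+ \<omega>. ennreal (pmf q (T \<omega>) / pmf ?\<mu> (T \<omega>)) \<partial>p)
      = (\<integral>\<^sup>+ t. ennreal (pmf q t / pmf ?\<mu> t) \<partial>measure_pmf ?\<mu>)"
    by simp
  also have "\<dots> = (\<integral>\<^sup>+ t. ennreal (pmf ?\<mu> t) * ennreal (pmf q t / pmf ?\<mu> t) \<partial>count_space UNIV)"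
    by (rule nn_integral_measure_pmf)
  also have "\<dots> \<le> (\<integral>\<^sup>+ t. ennreal (pmf q t) \<partial>count_space UNIV)"
  proof (intro nn_integral_mono)
    fix t
    have "pmf ?\<mu> t * (pmf q t / pmf ?\<mu> t) \<le> pmf q t"
      by (cases "pmf ?\<mu> t = 0") auto
    then show "ennreal (pmf ?\<mu> t) * ennreal (pmf q t / pmf ?\<mu> t) \<le> ennreal (pmf q t)"
      by (simp add: ennreal_mult[symmetric] ennreal_leI)
  qed
  also have "\<dots> = 1" by (simp add: nn_integral_pmf emeasure_pmf)
  finally show ?thesis .
qed

text \<open>Gibbs' inequality in pointwise form: it is ln r <= r - 1 for r = b c / (d a).\<close>
lemma neg_log_le_ratio:
  fixes a b c d :: real
  assumes "0 < a" "0 < b" "0 < c" "0 < d"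
  shows "- log 2 a + - log 2 d + 1 / ln 2 \<le> - log 2 b + - log 2 c + (b * c / (d * a)) / ln 2"
proof -
  define r where "r = b * c / (d * a)"
  have "ln r = ln b + ln c - ln d - ln a"
    using assms by (simp add: r_def ln_mult ln_div)
  moreover have "ln r / ln 2 \<le> (r - 1) / ln 2"
    using assms by (intro divide_right_mono ln_le_minus_one) (simp_all add: r_def)
  ultimately show ?thesis
    unfolding log_def r_def[symmetric] by (simp add: diff_divide_distrib add_divide_distrib)
qed

lemma ennreal_neg_log_le_ratio:
  fixes a b c d :: real
  assumes "0 < a" "0 < b" "0 < c" "0 < d" "a \<le> 1" "b \<le> 1" "c \<le> 1" "d \<le> 1"
  shows "ennreal (- log 2 a) + ennreal (- log 2 d) + ennreal (1 / ln 2)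
    \<le> ennreal (- log 2 b) + ennreal (- log 2 c) + ennreal (1 / ln 2) * ennreal (b * c / (d * a))"
proof -
  have nn: "0 \<le> - log 2 x" if "0 < x" "x \<le> 1" for x :: real
    using that by (intro neg_log_nonneg) simp_all
  have sum3: "ennreal x + ennreal y + ennreal z = ennreal (x + y + z)"
    if "0 \<le> x" "0 \<le> y" "0 \<le> z" for x y z :: real
    using that by (simp add: ennreal_plus)
  have "ennreal (- log 2 a) + ennreal (- log 2 d) + ennreal (1 / ln 2)
      = ennreal (- log 2 a + - log 2 d + 1 / ln 2)"
    by (rule sum3) (use assms nn in auto)
  also have "\<dots> \<le> ennreal (- log 2 b + - log 2 c + (b * c / (d * a)) / ln 2)"
    by (intro ennreal_leI neg_log_le_ratio assms(1-4))
  also have "\<dots> = ennreal (- log 2 b) + ennreal (- log 2 c) + ennreal ((b * c / (d * a)) / ln 2)"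
    by (rule sum3[symmetric]) (use assms nn in auto)
  also have "ennreal ((b * c / (d * a)) / ln 2) = ennreal (1 / ln 2) * ennreal (b * c / (d * a))"
    by (subst ennreal_mult[symmetric]) (use assms in auto)
  finally show ?thesis .
qed

text \<open>Integrate the pointwise Gibbs inequality over p: the ratio term integrates to at most 1
  because the conditionally independent coupling is a probability distribution, and the finite
  constant 1 / ln 2 cancels.\<close>
lemma ent_ext_submodular:
  fixes p :: "'a pmf"
  shows "ent_ext (map_pmf (\<lambda>\<omega>. (X \<omega>, Y \<omega>, Z \<omega>)) p) + ent_ext (map_pmf Z p)
    \<le> ent_ext (map_pmf (\<lambda>\<omega>. (X \<omega>, Z \<omega>)) p) + ent_ext (map_pmf (\<lambda>\<omega>. (Y \<omega>, Z \<omega>)) p)"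
proof -
  define T where "T = (\<lambda>\<omega>. (X \<omega>, Y \<omega>, Z \<omega>))"
  define XZ where "XZ = (\<lambda>\<omega>. (X \<omega>, Z \<omega>))"
  define YZ where "YZ = (\<lambda>\<omega>. (Y \<omega>, Z \<omega>))"
  define A where "A = (\<lambda>\<omega>. ennreal (- log 2 (pmf (map_pmf T p) (T \<omega>))))"
  define B where "B = (\<lambda>\<omega>. ennreal (- log 2 (pmf (map_pmf XZ p) (XZ \<omega>))))"
  define C where "C = (\<lambda>\<omega>. ennreal (- log 2 (pmf (map_pmf YZ p) (YZ \<omega>))))"
  define D where "D = (\<lambda>\<omega>. ennreal (- log 2 (pmf (map_pmf Z p) (Z \<omega>))))"
  define R where
    "R = (\<lambda>\<omega>. ennreal (pmf (cond_indep_coupling p X Y Z) (T \<omega>) / pmf (map_pmf T p) (T \<omega>)))"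
  define k where "k = ennreal (1 / ln 2)"
  have "A \<omega> + D \<omega> + k \<le> B \<omega> + C \<omega> + k * R \<omega>" if "\<omega> \<in> set_pmf p" for \<omega>
    using that ennreal_neg_log_le_ratio[of "pmf (map_pmf T p) (T \<omega>)" "pmf (map_pmf XZ p) (XZ \<omega>)"
        "pmf (map_pmf YZ p) (YZ \<omega>)" "pmf (map_pmf Z p) (Z \<omega>)"]
    by (simp add: A_def B_def C_def D_def R_def k_def T_def XZ_def YZ_def pmf_positive
        pmf_le_1 pmf_cond_indep_coupling mult.commute)
  then have "(\<integral>\<^sup>+\<omega>. A \<omega> \<partial>p) + (\<integral>\<^sup>+\<omega>. D \<omega> \<partial>p) + k
      \<le> (\<integral>\<^sup>+\<omega>. B \<omega> \<partial>p) + (\<integral>\<^sup>+\<omega>. C \<omega> \<partial>p) + k * (\<integral>\<^sup>+\<omega>. R \<omega> \<partial>p)"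
    using nn_integral_mono_AE[OF AE_pmfI, of p "\<lambda>\<omega>. A \<omega> + D \<omega> + k" "\<lambda>\<omega>. B \<omega> + C \<omega> + k * R \<omega>"]
    by (simp add: nn_integral_add nn_integral_cmult emeasure_pmf)
  also have "\<dots> \<le> (\<integral>\<^sup>+\<omega>. B \<omega> \<partial>p) + (\<integral>\<^sup>+\<omega>. C \<omega> \<partial>p) + k"
    using nn_integral_pmf_ratio_le_1[where q = "cond_indep_coupling p X Y Z" and T = T]
    unfolding R_def
    by (intro add_left_mono) (metis mult.right_neutral mult_left_mono zero_le)
  finally show ?thesis
    unfolding ent_ext_map_pmf_eq_nn_integral A_def B_def C_def D_def T_def XZ_def YZ_def
    by (simp add: k_def ennreal_add_left_cancel_le add.commute[of _ "ennreal _"]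
        add.assoc[symmetric])
qed

lemma Xs_eq_iff: "Xs A x = Xs A x' \<longleftrightarrow> (\<forall>j\<in>A. x j = x' j)"
  unfolding Xs_def by (metis restrict_apply' restrict_ext)

lemma Xjoint_eq_iff: "Xjoint Qs x = Xjoint Qs x' \<longleftrightarrow> Xs (\<Union>(set_mset Qs)) x = Xs (\<Union>(set_mset Qs)) x'"
proof -
  have "Xjoint Qs x = Xjoint Qs x' \<longleftrightarrow> (\<forall>Q\<in>#Qs. Xs Q x = Xs Q x')"
    unfolding Xjoint_def restrict_def by (metis (mono_tags))
  then show ?thesis by (auto simp: Xs_eq_iff)
qed

definition set_entropy :: "outcome pmf \<Rightarrow> nat set \<Rightarrow> ennreal" where
  "set_entropy p A = ent_ext (map_pmf (Xs A) p)"

lemma set_entropy_eqI: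
  assumes "\<And>x x'. Y x = Y x' \<longleftrightarrow> Xs A x = Xs A x'"
  shows "ent_ext (map_pmf Y p) = set_entropy p A"
  unfolding set_entropy_def by (rule ent_ext_map_pmf_cong) (rule assms)

lemma set_entropy_empty: "set_entropy p {} = 0"
proof -
  have "Xs {} = (\<lambda>_ _. undefined)"
    by (simp add: fun_eq_iff Xs_def)
  then show ?thesis by (simp add: set_entropy_def ent_ext_return_pmf)
qed

lemma set_entropy_mono: "A \<subseteq> B \<Longrightarrow> set_entropy p A \<le> set_entropy p B"
  unfolding set_entropy_def by (rule ent_ext_map_pmf_mono) (auto simp: Xs_eq_iff)

lemma set_entropy_submodular:
  "set_entropy p (A \<union> B) + set_entropy p (A \<inter> B) \<le> set_entropy p A + set_entropy p B"
proof -
  have "ent_ext (map_pmf (\<lambda>x. (Xs A x, Xs B x, Xs (A \<inter> B) x)) p) = set_entropy p (A \<union> B)"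
    "ent_ext (map_pmf (\<lambda>x. (Xs A x, Xs (A \<inter> B) x)) p) = set_entropy p A"
    "ent_ext (map_pmf (\<lambda>x. (Xs B x, Xs (A \<inter> B) x)) p) = set_entropy p B"
    by (intro set_entropy_eqI; auto simp: Xs_eq_iff)+
  then show ?thesis
    using ent_ext_submodular[of "Xs A" "Xs B" "Xs (A \<inter> B)" p] by (simp add: set_entropy_def)
qed

lemma set_entropy_finite:
  assumes "finite_entropies n p" and "A \<subseteq> {1..n}"
  shows "set_entropy p A < \<infinity>"
proof -
  have "finite A" using assms(2) finite_subset by blast
  then show ?thesis using assms(2)
  proof (induction A rule: finite_induct)
    case empty
    then show ?case by (simp add: set_entropy_empty)
  next
    case (insert i A)
    have "set_entropy p {i} = ent_ext (map_pmf (\<lambda>x. x i) p)"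
      by (rule set_entropy_eqI[symmetric]) (auto simp: Xs_eq_iff)
    then have "set_entropy p {i} < \<infinity>"
      using assms(1) insert.prems by (simp add: finite_entropies_def)
    moreover have "set_entropy p ({i} \<union> A) \<le> set_entropy p {i} + set_entropy p A"
      using set_entropy_submodular[of p "{i}" A] insert.hyps(2) by (simp add: set_entropy_empty)
    ultimately show ?case
      using insert by (simp add: order_le_less_trans)
  qed
qed

text \<open>This is H(X_A | X_C). Since enn2real sends an infinite entropy to 0, it is only meaningful
  under finite_entropies, for A and C inside {1..n}.\<close>
definition cond_set_entropy :: "outcome pmf \<Rightarrow> nat set \<Rightarrow> nat set \<Rightarrow> real" where
  "cond_set_entropy p C A = enn2real (set_entropy p (A \<union> C)) - enn2real (set_entropy p C)"

definition cmi_defect :: "('a set \<Rightarrow> real) \<Rightarrow> 'a set multiset \<Rightarrow> real" where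
  "cmi_defect g Qs = (\<Sum>Q\<in>#Qs. g Q) - g (\<Union>(set_mset Qs))"

lemma valid_iff_cmi_defect: "valid p (C, Qs) \<longleftrightarrow> cmi_defect (cond_set_entropy p C) Qs = 0"
proof -
  have Hc_eq: "Hc p Y (Xs C) = cond_set_entropy p C A"
    if "\<And>x x'. Y x = Y x' \<longleftrightarrow> Xs A x = Xs A x'" for Y :: "outcome \<Rightarrow> 'b" and A
  proof -
    have "ent_ext (map_pmf (\<lambda>x. (Y x, Xs C x)) p) = set_entropy p (A \<union> C)"
      by (rule set_entropy_eqI) (auto simp: that Xs_eq_iff)
    then show ?thesis by (simp add: Hc_def H_def ent_def cond_set_entropy_def set_entropy_def)
  qed
  have "Hc p (Xs Q) (Xs C) = cond_set_entropy p C Q" for Q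
    by (rule Hc_eq) simp
  moreover have "Hc p (Xjoint Qs) (Xs C) = cond_set_entropy p C (\<Union>(set_mset Qs))"
    by (rule Hc_eq) (simp add: Xjoint_eq_iff)
  ultimately show ?thesis by (simp add: valid_def cmi_defect_def)
qed

lemma cmi_defect_size_le_1: "size Qs \<le> 1 \<Longrightarrow> g {} = 0 \<Longrightarrow> cmi_defect g Qs = 0"
  by (cases Qs; cases "Qs = {#}") (auto simp: cmi_defect_def)

locale polymatroid =
  fixes g :: "'a set \<Rightarrow> real" and U :: "'a set"
  assumes empty [simp]: "g {} = 0"
    and mono: "A \<subseteq> B \<Longrightarrow> B \<subseteq> U \<Longrightarrow> g A \<le> g B"
    and submodular: "A \<subseteq> U \<Longrightarrow> B \<subseteq> U \<Longrightarrow> g (A \<union> B) + g (A \<inter> B) \<le> g A + g B"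

lemma polymatroid_cond_set_entropy:
  assumes fe: "finite_entropies n p" and C: "C \<subseteq> {1..n}"
  shows "polymatroid (cond_set_entropy p C) {1..n}"
proof
  have fin: "set_entropy p (A \<union> C) < \<infinity>" if "A \<subseteq> {1..n}" for A
    using set_entropy_finite[OF fe, of "A \<union> C"] that C by simp
  show "cond_set_entropy p C {} = 0" by (simp add: cond_set_entropy_def)
  show "cond_set_entropy p C A \<le> cond_set_entropy p C B" if "A \<subseteq> B" "B \<subseteq> {1..n}" for A B
    using that fin[of B] set_entropy_mono[of "A \<union> C" "B \<union> C" p]
    by (auto simp: cond_set_entropy_def intro!: enn2real_mono)
  show "cond_set_entropy p C (A \<union> B) + cond_set_entropy p C (A \<inter> B)
      \<le> cond_set_entropy p C A + cond_set_entropy p C B" if "A \<subseteq> {1..n}" "B \<subseteq> {1..n}" for A B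
  proof -
    have "A \<union> B \<subseteq> {1..n}" "A \<inter> B \<subseteq> {1..n}" using that by auto
    note fins = fin[OF that(1)] fin[OF that(2)] fin[OF this(1)] fin[OF this(2)]
    have "set_entropy p ((A \<union> B) \<union> C) + set_entropy p ((A \<inter> B) \<union> C)
        \<le> set_entropy p (A \<union> C) + set_entropy p (B \<union> C)"
      using set_entropy_submodular[of p "A \<union> C" "B \<union> C"]
      by (metis Un_Int_distrib2 sup_assoc sup_commute sup_left_idem)
    then have "enn2real (set_entropy p ((A \<union> B) \<union> C) + set_entropy p ((A \<inter> B) \<union> C))
        \<le> enn2real (set_entropy p (A \<union> C) + set_entropy p (B \<union> C))"
      using fins by (intro enn2real_mono) auto
    then show ?thesis
      using fins by (simp add: cond_set_entropy_def enn2real_plus)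
  qed
qed

lemma IK_obtain_pair:
  assumes "q \<in> IK Qs"
  obtains Q1 Q2 R where "Qs = add_mset Q1 (add_mset Q2 R)" "q \<in> Q1" "q \<in> Q2"
proof -
  let ?F = "filter_mset (\<lambda>Q. q \<in> Q) Qs"
  have "size ?F = Suc (Suc (size ?F - 2))" using assms by (simp add: IK_def split: if_splits)
  then obtain Q1 Q2 F where F: "?F = add_mset Q1 (add_mset Q2 F)"
    by (elim size_mset_SucE) simp
  then have "Q1 \<in># ?F" "Q2 \<in># ?F" by simp_all
  then have "q \<in> Q1" "q \<in> Q2" by simp_all
  moreover have "Qs = add_mset Q1 (add_mset Q2 (F + filter_mset (\<lambda>Q. q \<notin> Q) Qs))"
    using multiset_partition[of Qs "\<lambda>Q. q \<in> Q"] F by simp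
  ultimately show ?thesis by (rule that[rotated])
qed

lemma IK_subset_Union: "IK Qs \<subseteq> \<Union>(set_mset Qs)"
proof
  fix q assume "q \<in> IK Qs"
  then obtain Q1 Q2 R where "Qs = add_mset Q1 (add_mset Q2 R)" "q \<in> Q1"
    by (rule IK_obtain_pair)
  then show "q \<in> \<Union>(set_mset Qs)" by auto
qed

lemma sum_mset_filter_nonempty:
  "g {} = 0 \<Longrightarrow> (\<Sum>P\<in>#M. g P) = (\<Sum>P\<in>#filter_mset (\<lambda>P. P \<noteq> {}) M. g P)"
  by (induction M) auto

context polymatroid
begin

lemma nonneg: "A \<subseteq> U \<Longrightarrow> 0 \<le> g A"
  using mono[of "{}" A] by simp

lemma subadditive: "A \<subseteq> U \<Longrightarrow> B \<subseteq> U \<Longrightarrow> g (A \<union> B) \<le> g A + g B"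
  using submodular[of A B] nonneg[of "A \<inter> B"] by (simp add: le_infI1)

lemma Union_le_sum: "\<forall>Q\<in>#Qs. Q \<subseteq> U \<Longrightarrow> g (\<Union>(set_mset Qs)) \<le> (\<Sum>Q\<in>#Qs. g Q)"
proof (induction Qs)
  case empty
  show ?case by simp
next
  case (add Q Qs)
  have "g (Q \<union> \<Union>(set_mset Qs)) \<le> g Q + g (\<Union>(set_mset Qs))"
    using add.prems by (intro subadditive) auto
  also have "\<dots> \<le> g Q + (\<Sum>Q\<in>#Qs. g Q)"
    using add by simp
  finally show ?case by simp
qed

lemma cmi_defect_nonneg: "\<forall>Q\<in>#Qs. Q \<subseteq> U \<Longrightarrow> 0 \<le> cmi_defect g Qs"
  using Union_le_sum by (simp add: cmi_defect_def)

lemma Un_null: "A \<subseteq> U \<Longrightarrow> J \<subseteq> U \<Longrightarrow> g J = 0 \<Longrightarrow> g (A \<union> J) = g A"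
  using mono[of A "A \<union> J"] subadditive[of A J] by auto

lemma sum_singletons_ge: "finite I \<Longrightarrow> I \<subseteq> U \<Longrightarrow> g I \<le> (\<Sum>q\<in>I. g {q})"
proof (induction I rule: finite_induct)
  case (insert q I)
  then have "g ({q} \<union> I) \<le> g {q} + g I" by (intro subadditive) auto
  then show ?case using insert by simp
qed simp

lemma inter_le_cmi_defect:
  assumes "\<forall>Q\<in>#add_mset Q1 (add_mset Q2 R). Q \<subseteq> U"
  shows "g (Q1 \<inter> Q2) \<le> cmi_defect g (add_mset Q1 (add_mset Q2 R))"
proof -
  have "g ((Q1 \<union> Q2) \<union> \<Union>(set_mset R)) \<le> g (Q1 \<union> Q2) + g (\<Union>(set_mset R))"
    using assms by (intro subadditive) auto
  moreover have "g (\<Union>(set_mset R)) \<le> (\<Sum>Q\<in>#R. g Q)"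
    using assms by (intro Union_le_sum) auto
  moreover have "g (Q1 \<union> Q2) + g (Q1 \<inter> Q2) \<le> g Q1 + g Q2"
    using assms by (intro submodular) auto
  ultimately show ?thesis by (simp add: cmi_defect_def Un_assoc)
qed

lemma cmi_defect_Diff_null:
  assumes QU: "\<forall>Q\<in>#Qs. Q \<subseteq> U" and JU: "J \<subseteq> U" and null: "g J = 0"
  shows "cmi_defect g Qs = cmi_defect g (filter_mset (\<lambda>P. P \<noteq> {}) (image_mset (\<lambda>Q. Q - J) Qs))"
proof -
  have g_Diff: "g A = g (A - J)" if "A \<subseteq> U" for A
  proof -
    have "g (A \<inter> J) = 0" using mono[of "A \<inter> J" J] nonneg[of "A \<inter> J"] JU null by auto
    then have "g ((A - J) \<union> (A \<inter> J)) = g (A - J)" using that JU by (intro Un_null) auto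
    then show ?thesis by (simp add: Un_Diff_Int)
  qed
  have "(\<Sum>Q\<in>#Qs. g Q) = (\<Sum>P\<in>#image_mset (\<lambda>Q. Q - J) Qs. g P)"
    using QU g_Diff by (simp add: multiset.map_comp comp_def cong: image_mset_cong)
  also have "\<dots> = (\<Sum>P\<in>#filter_mset (\<lambda>P. P \<noteq> {}) (image_mset (\<lambda>Q. Q - J) Qs). g P)"
    by (rule sum_mset_filter_nonempty) simp
  moreover have "\<Union>(set_mset (filter_mset (\<lambda>P. P \<noteq> {}) (image_mset (\<lambda>Q. Q - J) Qs)))
      = \<Union>(set_mset Qs) - J"
    by auto
  moreover have "\<Union>(set_mset Qs) \<subseteq> U" using QU by auto
  ultimately show ?thesis
    using g_Diff[of "\<Union>(set_mset Qs)"] by (simp add: cmi_defect_def)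
qed

end

lemma cmi_defect_eq_0_iff_IK_Ps:
  assumes "polymatroid g U" and "finite U" and QU: "\<forall>Q\<in>#Qs. Q \<subseteq> U"
  shows "cmi_defect g Qs = 0 \<longleftrightarrow> g (IK Qs) = 0 \<and> cmi_defect g (Ps Qs) = 0"
proof -
  interpret polymatroid g U by fact
  have IU: "IK Qs \<subseteq> U" using IK_subset_Union QU by blast
  have remove_IK: "cmi_defect g Qs = cmi_defect g (Ps Qs)" if "g (IK Qs) = 0"
    unfolding Ps_def using QU IU that by (rule cmi_defect_Diff_null)
  have "g {q} = 0" if "cmi_defect g Qs = 0" "q \<in> IK Qs" for q
  proof -
    obtain Q1 Q2 R where QR: "Qs = add_mset Q1 (add_mset Q2 R)" "q \<in> Q1" "q \<in> Q2"
      using IK_obtain_pair[OF \<open>q \<in> IK Qs\<close>] .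
    have "g {q} \<le> g (Q1 \<inter> Q2)" using QR QU by (intro mono) auto
    also have "\<dots> \<le> cmi_defect g Qs" using QU unfolding QR by (intro inter_le_cmi_defect)
    finally show ?thesis using that nonneg[of "{q}"] IU by auto
  qed
  moreover have "g (IK Qs) \<le> (\<Sum>q\<in>IK Qs. g {q})"
    using IU assms(2) by (intro sum_singletons_ge) (auto intro: finite_subset)
  ultimately have "cmi_defect g Qs = 0 \<Longrightarrow> g (IK Qs) = 0"
    using nonneg[OF IU] by simp
  then show ?thesis using remove_IK by auto
qed

lemma cmi_defect_can_eq_0_iff_IK_Ps:
  assumes "polymatroid g U" and sz: "2 \<le> size Qs" and QU: "\<forall>Q\<in>#Qs. Q \<subseteq> U"
  shows "cmi_defect g (snd (the (can (C, Qs)))) = 0 \<longleftrightarrow> g (IK Qs) = 0 \<and> cmi_defect g (Ps Qs) = 0"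
proof -
  interpret polymatroid g U by fact
  let ?I = "IK Qs" and ?P = "Ps Qs"
  have IU: "?I \<subseteq> U" using IK_subset_Union QU by blast
  have PU: "\<forall>P\<in>#?P. P \<subseteq> U" using QU by (auto simp: Ps_def)
  consider (small) "?I \<noteq> {}" "size ?P \<le> 1" | (disjoint) "?I = {}"
    | (general) "?I \<noteq> {}" "2 \<le> size ?P"
    by linarith
  then show ?thesis
  proof cases
    case small
    then show ?thesis
      using sz cmi_defect_size_le_1[of "Ps Qs" g] by (simp add: can_def cmi_defect_def)
  next
    case disjoint
    then show ?thesis using sz by (simp add: can_def)
  next
    case general
    \<comment> \<open>The defect of can(K) is g I_K + cmi_defect g P + (g (U P) + g I_K - g (U P u I_K)),
      a sum of three nonnegative terms.\<close>
    then have "snd (the (can (C, Qs))) = {#?I, ?I#} + ?P" using sz by (simp add: can_def)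
    moreover have "cmi_defect g ({#?I, ?I#} + ?P)
        = 2 * g ?I + (\<Sum>P\<in>#?P. g P) - g (\<Union>(set_mset ?P) \<union> ?I)"
      by (simp add: cmi_defect_def Un_commute)
    moreover have "g (\<Union>(set_mset ?P)) \<le> g (\<Union>(set_mset ?P) \<union> ?I)"
      "g (\<Union>(set_mset ?P) \<union> ?I) \<le> g (\<Union>(set_mset ?P)) + g ?I"
      using IU PU by (auto intro!: mono subadditive)
    moreover have "0 \<le> cmi_defect g ?P" "0 \<le> g ?I"
      using PU IU by (auto intro: cmi_defect_nonneg nonneg)
    ultimately show ?thesis by (auto simp: cmi_defect_def)
  qed
qed

lemma cmi_defect_eq_0_iff_can:
  assumes "polymatroid g U" and "finite U" and "2 \<le> size Qs" and "\<forall>Q\<in>#Qs. Q \<subseteq> U"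
  shows "cmi_defect g Qs = 0 \<longleftrightarrow> cmi_defect g (snd (the (can (C, Qs)))) = 0"
  using cmi_defect_eq_0_iff_IK_Ps[OF assms(1,2,4)] cmi_defect_can_eq_0_iff_IK_Ps[OF assms(1,3,4)]
  by simp

lemma ent_ext_map_fair_coin:
  "ent_ext (map_pmf f (pmf_of_set (UNIV :: bool set))) = (if f True = f False then 0 else 1)"
proof (cases "f True = f False")
  case True
  then have "f = (\<lambda>_. f True)" by (metis (full_types))
  then show ?thesis using True by (metis map_pmf_const ent_ext_return_pmf)
next
  case False
  let ?coin = "pmf_of_set (UNIV :: bool set)"
  have "ent_ext (map_pmf f ?coin) = ent_ext (map_pmf id ?coin)"
    using False by (intro ent_ext_map_pmf_cong) (case_tac \<omega>; case_tac \<omega>'; simp)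
  also have "\<dots> = ennreal (- (log 2 (1 / 2) / 2)) * 2"
    by (simp add: ent_ext_def nn_integral_count_space_finite)
  also have "\<dots> = ennreal (1 / 2 * 2)"
    by (subst ennreal_mult) (simp_all add: log_divide)
  also have "\<dots> = 1"
    by simp
  finally show ?thesis using False by simp
qed

definition coin_pmf :: "nat set \<Rightarrow> outcome pmf" where
  "coin_pmf S = map_pmf (\<lambda>b j. if b \<and> j \<in> S then 1 else 0) (pmf_of_set UNIV)"

lemma set_entropy_coin_pmf: "set_entropy (coin_pmf S) A = (if A \<inter> S = {} then 0 else 1)"
proof -
  have "(Xs A (\<lambda>j. if True \<and> j \<in> S then 1 else 0) = Xs A (\<lambda>j. if False \<and> j \<in> S then 1 else 0))
      \<longleftrightarrow> A \<inter> S = {}"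
    by (auto simp: Xs_eq_iff)
  then show ?thesis
    by (simp add: set_entropy_def coin_pmf_def pmf.map_comp comp_def ent_ext_map_fair_coin
        del: Int_emptyI)
qed

lemma finite_entropies_coin_pmf: "finite_entropies n (coin_pmf S)"
  by (simp add: finite_entropies_def coin_pmf_def pmf.map_comp comp_def ent_ext_map_fair_coin)

definition coin_refutes :: "nat set \<Rightarrow> nat set \<Rightarrow> nat set multiset \<Rightarrow> bool" where
  "coin_refutes S C Qs \<longleftrightarrow> C \<inter> S = {} \<and> 2 \<le> size (filter_mset (\<lambda>Q. Q \<inter> S \<noteq> {}) Qs)"

lemma valid_coin_pmf_iff: "valid (coin_pmf S) (C, Qs) \<longleftrightarrow> \<not> coin_refutes S C Qs"
proof (cases "C \<inter> S = {}")
  case False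
  then have "cond_set_entropy (coin_pmf S) C = (\<lambda>_. 0)"
    by (auto simp: fun_eq_iff cond_set_entropy_def set_entropy_coin_pmf)
  then show ?thesis
    using False by (simp add: valid_iff_cmi_defect cmi_defect_def coin_refutes_def)
next
  case True
  let ?F = "filter_mset (\<lambda>Q. Q \<inter> S \<noteq> {}) Qs"
  have "cond_set_entropy (coin_pmf S) C = (\<lambda>A. if A \<inter> S = {} then 0 else 1)"
    using True by (auto simp: fun_eq_iff cond_set_entropy_def set_entropy_coin_pmf)
  moreover have "(\<Sum>Q\<in>#Qs. if Q \<inter> S = {} then 0 else 1 :: real) = size ?F"
    by (induction Qs) auto
  moreover define k where "k = size ?F"
  moreover have "\<Union>(set_mset Qs) \<inter> S = {} \<longleftrightarrow> k = 0"
    by (auto simp: k_def)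
  ultimately have "valid (coin_pmf S) (C, Qs) \<longleftrightarrow> real k - (if k = 0 then 0 else 1) = 0"
    by (simp add: valid_iff_cmi_defect cmi_defect_def)
  moreover have "coin_refutes S C Qs \<longleftrightarrow> 2 \<le> k"
    using True by (simp add: coin_refutes_def k_def)
  ultimately show ?thesis by auto
qed

lemma coin_refutes_iff_if_cmi_equiv:
  "cmi_equiv n (C, Qs) (C', Qs') \<Longrightarrow> coin_refutes S C Qs \<longleftrightarrow> coin_refutes S C' Qs'"
  by (metis cmi_equiv_def finite_entropies_coin_pmf valid_coin_pmf_iff)

lemma coin_refutes_size: "coin_refutes S C Qs \<Longrightarrow> 2 \<le> size Qs"
  unfolding coin_refutes_def by (meson order_trans size_filter_mset_lesseq)

lemma coin_refutes_Un_Union: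
  assumes "pure (C, Qs)" and "2 \<le> size Qs" and "T \<inter> C = {}"
  shows "coin_refutes (T \<union> \<Union>(set_mset Qs)) C Qs"
proof -
  have "filter_mset (\<lambda>Q. Q \<inter> (T \<union> \<Union>(set_mset Qs)) \<noteq> {}) Qs = Qs"
    using assms(1) by (auto simp: pure_def filter_mset_eq_conv)
  then show ?thesis
    using assms by (auto simp: coin_refutes_def pure_def)
qed

lemma coin_refutes_singleton_iff:
  "2 \<le> size Qs \<Longrightarrow> q \<notin> C \<Longrightarrow> coin_refutes {q} C Qs \<longleftrightarrow> q \<in> IK Qs"
  by (simp add: coin_refutes_def IK_def)

lemma size_le_1_mset_eq:
  assumes "size M \<le> 1" "a \<in># M" "b \<in># M"
  shows "a = b"
proof -
  obtain N where "M = add_mset a N" using multi_member_split[OF assms(2)] by blast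
  moreover have "N = {#}" using assms(1) calculation by simp
  ultimately show ?thesis using assms(3) by simp
qed

definition disjoint_blocks :: "'a set multiset \<Rightarrow> bool" where
  "disjoint_blocks M \<longleftrightarrow> (\<forall>P\<in>#M. P \<noteq> {}) \<and> (\<forall>x. size (filter_mset (\<lambda>P. x \<in> P) M) \<le> 1)"

definition separated :: "'a set multiset \<Rightarrow> 'a \<Rightarrow> 'a \<Rightarrow> bool" where
  "separated M x y \<longleftrightarrow> x \<in> \<Union>(set_mset M) \<and> y \<in> \<Union>(set_mset M) \<and> \<not> (\<exists>P\<in>#M. x \<in> P \<and> y \<in> P)"

lemma disjoint_blocks_unique:
  assumes "disjoint_blocks M" "P1 \<in># M" "P2 \<in># M" "x \<in> P1" "x \<in> P2"
  shows "P1 = P2"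
  using assms by (intro size_le_1_mset_eq[of "filter_mset (\<lambda>P. x \<in> P) M"])
    (auto simp: disjoint_blocks_def)

lemma disjoint_blocks_count:
  assumes "disjoint_blocks M"
  shows "count M P = (if P \<in># M then 1 else 0)"
proof (cases "P \<in># M")
  case True
  then obtain x where "x \<in> P" using assms by (auto simp: disjoint_blocks_def)
  then have "count M P = count (filter_mset (\<lambda>P. x \<in> P) M) P" by simp
  also have "\<dots> \<le> size (filter_mset (\<lambda>P. x \<in> P) M)" by (rule count_le_size)
  also have "\<dots> \<le> 1" using assms by (simp add: disjoint_blocks_def)
  finally show ?thesis using True by (auto simp: le_Suc_eq count_eq_zero_iff)
qed (simp add: not_in_iff)

lemma disjoint_blocks_eqI:
  assumes "disjoint_blocks M" "disjoint_blocks M'" "set_mset M = set_mset M'"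
  shows "M = M'"
proof (rule multiset_eqI)
  fix P
  show "count M P = count M' P"
    using disjoint_blocks_count[OF assms(1), of P] disjoint_blocks_count[OF assms(2), of P] assms(3)
    by simp
qed

lemma separated_size:
  assumes "separated M x y"
  shows "2 \<le> size M"
proof (rule ccontr)
  assume "\<not> 2 \<le> size M"
  moreover obtain P1 P2 where "P1 \<in># M" "x \<in> P1" "P2 \<in># M" "y \<in> P2"
    using assms by (auto simp: separated_def)
  ultimately show False
    using assms size_le_1_mset_eq[of M P1 P2] by (auto simp: separated_def)
qed

lemma disjoint_blocks_obtain_separated:
  assumes M: "disjoint_blocks M" and "2 \<le> size M" and P: "P \<in># M" "x \<in> P"
  obtains y where "separated M x y"
proof -
  have "size (M - {#P#}) = size M - 1" using P by (simp add: size_Diff_singleton)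
  then have "M - {#P#} \<noteq> {#}" using assms(2) by auto
  then obtain P2 where P2: "P2 \<in># M - {#P#}" by blast
  then have "P2 \<in># M" by (rule in_diffD)
  then obtain y where y: "y \<in> P2" using M by (auto simp: disjoint_blocks_def)
  have "P2 \<noteq> P"
    using P2 P disjoint_blocks_count[OF M, of P] by (auto simp: in_diff_count)
  then have "\<not> (\<exists>P3\<in>#M. x \<in> P3 \<and> y \<in> P3)"
    using P \<open>P2 \<in># M\<close> y disjoint_blocks_unique[OF M] by metis
  then have "separated M x y"
    using P \<open>P2 \<in># M\<close> y by (auto simp: separated_def)
  then show ?thesis by (rule that)
qed

lemma set_mset_eq_separation_classes:
  assumes M: "disjoint_blocks M" and sz: "2 \<le> size M"
  shows "set_mset M =
    (\<lambda>x. {z. (\<exists>y. separated M z y) \<and> \<not> separated M x z}) ` {x. \<exists>y. separated M x y}"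
proof -
  let ?block = "\<lambda>x. {z. (\<exists>y. separated M z y) \<and> \<not> separated M x z}"
  have support: "{x. \<exists>y. separated M x y} = \<Union>(set_mset M)"
  proof (intro equalityI subsetI)
    fix x assume "x \<in> \<Union>(set_mset M)"
    then obtain P where "P \<in># M" "x \<in> P" by auto
    then obtain y where "separated M x y" by (rule disjoint_blocks_obtain_separated[OF M sz])
    then show "x \<in> {x. \<exists>y. separated M x y}" by blast
  qed (auto simp: separated_def)
  have block: "?block x = P" if P: "P \<in># M" "x \<in> P" for P x
  proof (intro equalityI subsetI)
    fix z assume "z \<in> ?block x"
    then have "z \<in> \<Union>(set_mset M)" "\<not> separated M x z" using support by blast+
    then obtain P' where "P' \<in># M" "x \<in> P'" "z \<in> P'" using P by (auto simp: separated_def)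
    then show "z \<in> P" using disjoint_blocks_unique[OF M _ P(1)] P(2) by blast
  next
    fix z assume "z \<in> P"
    then show "z \<in> ?block x" using support P by (auto simp: separated_def)
  qed
  have "set_mset M = ?block ` \<Union>(set_mset M)"
  proof (intro equalityI subsetI)
    fix P assume "P \<in># M"
    moreover obtain x where "x \<in> P" using M \<open>P \<in># M\<close> by (auto simp: disjoint_blocks_def)
    ultimately show "P \<in> ?block ` \<Union>(set_mset M)"
      using block by (intro image_eqI[of _ _ x]) auto
  next
    fix Q assume "Q \<in> ?block ` \<Union>(set_mset M)"
    then obtain P x where "P \<in># M" "x \<in> P" "Q = ?block x" by blast
    then show "Q \<in># M" using block by simp
  qed
  then show ?thesis by (simp only: support)
qed

lemma disjoint_blocks_eq_if_separated_eq:
  assumes M: "disjoint_blocks M" and M': "disjoint_blocks M'" and sz: "2 \<le> size M"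
    and sep: "separated M = separated M'"
  shows "M = M'"
proof -
  have "M \<noteq> {#}" using sz by auto
  then obtain P where "P \<in># M" by blast
  moreover obtain x where "x \<in> P" using M \<open>P \<in># M\<close> by (auto simp: disjoint_blocks_def)
  ultimately obtain y where "separated M x y" by (rule disjoint_blocks_obtain_separated[OF M sz])
  then have "separated M' x y" using sep by simp
  then have "2 \<le> size M'" by (rule separated_size)
  then show ?thesis
    using set_mset_eq_separation_classes[OF M sz] set_mset_eq_separation_classes[OF M'] sep
    by (intro disjoint_blocks_eqI[OF M M']) simp
qed

lemma size_filter_Diff_le:
  "size (filter_mset (\<lambda>P. x \<in> P) (filter_mset (\<lambda>P. P \<noteq> {}) (image_mset (\<lambda>Q. Q - I) M)))
    \<le> size (filter_mset (\<lambda>Q. x \<in> Q) M)"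
  by (induction M) auto

lemma disjoint_blocks_Ps: "disjoint_blocks (Ps Qs)"
proof -
  have "size (filter_mset (\<lambda>P. x \<in> P) (Ps Qs)) \<le> 1" for x
  proof (cases "x \<in> IK Qs")
    case True
    then have "filter_mset (\<lambda>P. x \<in> P) (Ps Qs) = {#}" by (auto simp: Ps_def)
    then show ?thesis by (metis size_empty le0)
  next
    case False
    have "size (filter_mset (\<lambda>P. x \<in> P) (Ps Qs)) \<le> size (filter_mset (\<lambda>Q. x \<in> Q) Qs)"
      unfolding Ps_def by (rule size_filter_Diff_le)
    also have "\<dots> \<le> 1"
    proof (cases "size Qs \<le> 1")
      case True
      then show ?thesis using size_filter_mset_lesseq[of "\<lambda>Q. x \<in> Q" Qs] by linarith
    next
      case False
      then show ?thesis using \<open>x \<notin> IK Qs\<close> by (simp add: IK_def)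
    qed
    finally show ?thesis .
  qed
  then show ?thesis by (auto simp: disjoint_blocks_def Ps_def)
qed

lemma size_filter_mset_pos_iff: "0 < size (filter_mset P M) \<longleftrightarrow> (\<exists>a\<in>#M. P a)"
  by (metis filter_mset_eq_mempty_iff size_eq_0_iff_empty neq0_conv)

lemma size_filter_mset_disj:
  "size (filter_mset (\<lambda>a. P a \<or> Q a) M) + size (filter_mset (\<lambda>a. P a \<and> Q a) M)
    = size (filter_mset P M) + size (filter_mset Q M)"
  by (induction M) auto

lemma in_Ps_iff: "x \<notin> IK Qs \<Longrightarrow> (\<exists>P\<in>#Ps Qs. x \<in> P) \<longleftrightarrow> (\<exists>Q\<in>#Qs. x \<in> Q)"
  by (auto simp: Ps_def)

lemma common_block_Ps_iff:
  "x \<notin> IK Qs \<Longrightarrow> y \<notin> IK Qs \<Longrightarrow> (\<exists>P\<in>#Ps Qs. x \<in> P \<and> y \<in> P) \<longleftrightarrow> (\<exists>Q\<in>#Qs. x \<in> Q \<and> y \<in> Q)"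
  by (auto simp: Ps_def)

text \<open>Counting the members that contain x, y, both, or either: each of x, y lies in at most one.\<close>
lemma coin_refutes_pair_iff:
  assumes sz: "2 \<le> size Qs" and x: "x \<notin> C" "x \<notin> IK Qs" and y: "y \<notin> C" "y \<notin> IK Qs"
  shows "coin_refutes {x, y} C Qs \<longleftrightarrow> separated (Ps Qs) x y"
proof -
  define a where "a = size (filter_mset (\<lambda>Q. x \<in> Q) Qs)"
  define b where "b = size (filter_mset (\<lambda>Q. y \<in> Q) Qs)"
  define c where "c = size (filter_mset (\<lambda>Q. x \<in> Q \<and> y \<in> Q) Qs)"
  define d where "d = size (filter_mset (\<lambda>Q. x \<in> Q \<or> y \<in> Q) Qs)"
  have "d + c = a + b" unfolding a_def b_def c_def d_def by (rule size_filter_mset_disj)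
  moreover have "a \<le> 1" "b \<le> 1" using sz x y by (auto simp: a_def b_def IK_def)
  moreover have "filter_mset (\<lambda>Q. x \<in> Q \<and> y \<in> Q) Qs
      = filter_mset (\<lambda>Q. y \<in> Q) (filter_mset (\<lambda>Q. x \<in> Q) Qs)"
    by (simp add: filter_filter_mset)
  then have "c \<le> a" unfolding a_def c_def by (metis size_filter_mset_lesseq)
  moreover have "separated (Ps Qs) x y \<longleftrightarrow> 0 < a \<and> 0 < b \<and> \<not> 0 < c"
    unfolding separated_def a_def b_def c_def size_filter_mset_pos_iff
    using x y by (simp add: in_Ps_iff common_block_Ps_iff)
  moreover have "filter_mset (\<lambda>Q. Q \<inter> {x, y} \<noteq> {}) Qs = filter_mset (\<lambda>Q. x \<in> Q \<or> y \<in> Q) Qs"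
    by (rule filter_mset_cong0) auto
  then have "coin_refutes {x, y} C Qs \<longleftrightarrow> 2 \<le> d"
    using x y by (simp add: coin_refutes_def d_def)
  ultimately show ?thesis by linarith
qed

lemma size_ge_2_if_coin_refutes_iff:
  assumes "pure (C, Qs)" and "2 \<le> size Qs"
    and "\<And>S. coin_refutes S C Qs \<longleftrightarrow> coin_refutes S C' Qs'"
  shows "2 \<le> size Qs'"
  using coin_refutes_Un_Union[OF assms(1,2), of "{}"] assms(3) coin_refutes_size by auto

lemma subset_if_coin_refutes_iff:
  assumes "pure (C', Qs')" and "2 \<le> size Qs'"
    and "\<And>S. coin_refutes S C Qs \<longleftrightarrow> coin_refutes S C' Qs'"
  shows "C \<subseteq> C'"
proof
  fix i assume "i \<in> C"
  show "i \<in> C'"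
  proof (rule ccontr)
    assume "i \<notin> C'"
    then have "coin_refutes ({i} \<union> \<Union>(set_mset Qs')) C' Qs'"
      using assms(1,2) by (intro coin_refutes_Un_Union) auto
    then have "coin_refutes ({i} \<union> \<Union>(set_mset Qs')) C Qs" using assms(3) by blast
    then show False using \<open>i \<in> C\<close> by (auto simp: coin_refutes_def)
  qed
qed

lemma pure_disjoint_Union: "pure (C, Qs) \<Longrightarrow> C \<inter> \<Union>(set_mset Qs) = {}"
  by (auto simp: pure_def)

lemma IK_eq_if_coin_refutes_iff:
  assumes "pure (C, Qs)" "pure (C, Qs')" and "2 \<le> size Qs" "2 \<le> size Qs'"
    and same: "\<And>S. coin_refutes S C Qs \<longleftrightarrow> coin_refutes S C Qs'"
  shows "IK Qs = IK Qs'"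
proof (intro set_eqI)
  fix q
  show "q \<in> IK Qs \<longleftrightarrow> q \<in> IK Qs'"
  proof (cases "q \<in> C")
    case True
    then show ?thesis
      using IK_subset_Union[of Qs] IK_subset_Union[of Qs'] pure_disjoint_Union assms(1,2) by blast
  next
    case False
    then show ?thesis
      using coin_refutes_singleton_iff[OF assms(3) False]
        coin_refutes_singleton_iff[OF assms(4) False]
        same by simp
  qed
qed

lemma separated_Ps_eq_if_coin_refutes_iff:
  assumes "pure (C, Qs)" "pure (C, Qs')" and "2 \<le> size Qs" "2 \<le> size Qs'"
    and same: "\<And>S. coin_refutes S C Qs \<longleftrightarrow> coin_refutes S C Qs'"
  shows "separated (Ps Qs) = separated (Ps Qs')"
proof (intro ext)
  fix x y
  have I: "IK Qs = IK Qs'" using assms by (rule IK_eq_if_coin_refutes_iff)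
  show "separated (Ps Qs) x y \<longleftrightarrow> separated (Ps Qs') x y"
  proof (cases "x \<in> C \<union> IK Qs \<or> y \<in> C \<union> IK Qs")
    case True
    have "\<Union>(set_mset (Ps Qs)) \<inter> (C \<union> IK Qs) = {}" "\<Union>(set_mset (Ps Qs')) \<inter> (C \<union> IK Qs') = {}"
      using assms(1,2) by (auto simp: Ps_def pure_def)
    then show ?thesis using True I by (auto simp: separated_def)
  next
    case False
    then show ?thesis
      using coin_refutes_pair_iff[OF assms(3), of x C y]
        coin_refutes_pair_iff[OF assms(4), of x C y]
        I same by auto
  qed
qed

lemma Ps_eq_self: "pure (C, Qs) \<Longrightarrow> IK Qs = {} \<Longrightarrow> Ps Qs = Qs"
  unfolding Ps_def pure_def by (simp add: filter_mset_eq_conv)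

lemma can_eq_if_coin_refutes_iff:
  assumes pure: "pure (C, Qs)" "pure (C', Qs')"
    and same: "\<And>S. coin_refutes S C Qs \<longleftrightarrow> coin_refutes S C' Qs'"
  shows "can (C, Qs) = can (C', Qs')"
proof (cases "2 \<le> size Qs")
  case False
  then have "\<not> 2 \<le> size Qs'"
    using size_ge_2_if_coin_refutes_iff[OF pure(2), of C Qs] same by metis
  then show ?thesis using False by (simp add: can_def)
next
  case True
  have sz: "2 \<le> size Qs" "2 \<le> size Qs'"
    using True size_ge_2_if_coin_refutes_iff[OF pure(1) True] same by auto
  have C: "C = C'"
    using subset_if_coin_refutes_iff[OF pure(2) sz(2), of C Qs]
      subset_if_coin_refutes_iff[OF pure(1) sz(1), of C' Qs'] same by blast
  note pure' = pure(1) pure(2)[folded C]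
  have same': "coin_refutes S C Qs \<longleftrightarrow> coin_refutes S C Qs'" for S using same C by simp
  have I: "IK Qs = IK Qs'"
    using pure' sz same' by (rule IK_eq_if_coin_refutes_iff)
  have sep: "separated (Ps Qs) = separated (Ps Qs')"
    using pure' sz same' by (rule separated_Ps_eq_if_coin_refutes_iff)
  have "Ps Qs = Ps Qs'" if "2 \<le> size (Ps Qs) \<or> 2 \<le> size (Ps Qs')"
    using that disjoint_blocks_eq_if_separated_eq[OF disjoint_blocks_Ps disjoint_blocks_Ps] sep
    by metis
  moreover have "2 \<le> size (Ps Qs)" if "IK Qs = {}"
    using that sz Ps_eq_self[OF pure(1)] by simp
  ultimately show ?thesis
    using sz C I by (auto simp: can_def)
qed

lemma valid_size_le_1: "size Qs \<le> 1 \<Longrightarrow> valid p (C, Qs)"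
  by (simp add: valid_iff_cmi_defect cmi_defect_size_le_1 cond_set_entropy_def)

lemma valid_iff_cmi_defect_can:
  assumes "is_cmi n (C, Qs)" and "finite_entropies n p" and "2 \<le> size Qs"
  shows "valid p (C, Qs) \<longleftrightarrow> cmi_defect (cond_set_entropy p C) (snd (the (can (C, Qs)))) = 0"
proof -
  have "C \<subseteq> {1..n}" "\<forall>Q\<in>#Qs. Q \<subseteq> {1..n}" using assms(1) by (auto simp: is_cmi_def)
  then show ?thesis
    using cmi_defect_eq_0_iff_can[OF polymatroid_cond_set_entropy[OF assms(2)]
        finite_atLeastAtMost assms(3)]
    by (simp add: valid_iff_cmi_defect)
qed

lemma cmi_equiv_if_can_eq:
  assumes "is_cmi n (C, Qs)" "is_cmi n (C', Qs')" and can: "can (C, Qs) = can (C', Qs')"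
  shows "cmi_equiv n (C, Qs) (C', Qs')"
proof (cases "size Qs \<le> 1")
  case True
  then have "size Qs' \<le> 1" using can by (simp add: can_def split: if_splits)
  then show ?thesis using True by (simp add: cmi_equiv_def valid_size_le_1)
next
  case False
  then have "2 \<le> size Qs" "2 \<le> size Qs'" "C = C'"
    using can by (auto simp: can_def split: if_splits)
  then show ?thesis
    using valid_iff_cmi_defect_can[OF assms(1)] valid_iff_cmi_defect_can[OF assms(2)] can
    by (simp add: cmi_equiv_def)
qed

theorem mainTheorem1:
  fixes n :: nat and C C' :: "nat set" and Qs Qs' :: "nat set multiset"
  assumes "is_cmi n (C, Qs)" and "is_cmi n (C', Qs')"
    and "pure (C, Qs)" and "pure (C', Qs')"
  shows "cmi_equiv n (C, Qs) (C', Qs') \<longleftrightarrow> can (C, Qs) = can (C', Qs')"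
proof
  assume "cmi_equiv n (C, Qs) (C', Qs')"
  then show "can (C, Qs) = can (C', Qs')"
    using assms(3,4) by (intro can_eq_if_coin_refutes_iff coin_refutes_iff_if_cmi_equiv)
next
  assume "can (C, Qs) = can (C', Qs')"
  then show "cmi_equiv n (C, Qs) (C', Qs')"
    using assms(1,2) by (intro cmi_equiv_if_can_eq)
qed

end
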